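(* Let $\mathbb{R}^{2n}$ have coordinates $(x_1,y_1,x_2,y_2,\dots,x_n,y_n)$. Consider symplectic forms $\omega_1 = \sum_{i=1}^n f_i(x_i,y_i)\,dx_i\wedge dy_i$ and $\omega_2 = \sum_{i=1}^n g_i(x_i,y_i)\,dx_i\wedge dy_i$, where $f_i,g_i:\mathbb{R}^2\to\mathbb{R}$ are smooth and nowhere vanishing. Suppose $\varphi = (\varphi^1,\dots,\varphi^{2n}) \in \operatorname{Symp}(\mathbb{R}^{2n},\omega_{\mathrm{std}})$ satisfies $\varphi^*\omega_1 = \omega_2$. Then for every point $x \in \mathbb{R}^{2n}$, the multisets $\{f_i(\varphi^{2i-1}(x),\varphi^{2i}(x)) : 1\le i\le n\}$ and $\{g_i(x_i,y_i) : 1\le i\le n\}$ coincide (counted with multiplicity).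
   Context: $\omega_{\mathrm{std}} = \sum_{i=1}^n dx_i\wedge dy_i$ in these coordinates. $\operatorname{Symp}(\mathbb{R}^{2n},\omega_{\mathrm{std}})$ is the set of diffeomorphisms $\varphi$ of $\mathbb{R}^{2n}$ with $\varphi^*\omega_{\mathrm{std}} = \omega_{\mathrm{std}}$, where $(\varphi^*\omega)(x)(v,w) = \omega(\varphi(x))(d\varphi_x v, d\varphi_x w)$. *)

theory Defs
  imports "HOL-Analysis.Analysis" "HOL-Library.Multiset"
begin

text \<open>Points of R^(2n) are modelled as (real \<times> real)^'n: the i-th component p$i is
  the coordinate pair (x_i, y_i).\<close>

text \<open>C-infinity smoothness: there is a family of iterated directional derivatives
  F [v1,...,vk] x = D^k f(x)[v1,...,vk], each of which is (Frechet) differentiable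
  everywhere with derivative h \<mapsto> F (h # vs) x.\<close>
definition smooth :: "('a::real_normed_vector \<Rightarrow> 'b::real_normed_vector) \<Rightarrow> bool" where
  "smooth f \<longleftrightarrow> (\<exists>F :: 'a list \<Rightarrow> 'a \<Rightarrow> 'b. F [] = f \<and>
      (\<forall>vs x. (F vs has_derivative (\<lambda>h. F (h # vs) x)) (at x)))"

definition diffeomorphism :: "('a::real_normed_vector \<Rightarrow> 'a) \<Rightarrow> bool" where
  "diffeomorphism \<phi> \<longleftrightarrow> bij \<phi> \<and> smooth \<phi> \<and> smooth (inv \<phi>)"

text \<open>The 2-form \<Sum>_i f_i(x_i,y_i) dx_i \<and> dy_i evaluated at point p on vectors v, w.\<close>
definition split_form :: "('n::finite \<Rightarrow> real \<times> real \<Rightarrow> real) \<Rightarrow>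
    (real \<times> real)^'n \<Rightarrow> (real \<times> real)^'n \<Rightarrow> (real \<times> real)^'n \<Rightarrow> real" where
  "split_form f p v w = (\<Sum>i\<in>UNIV. f i (p $ i) *
      (fst (v $ i) * snd (w $ i) - snd (v $ i) * fst (w $ i)))"

definition omega_std :: "(real \<times> real)^'n::finite \<Rightarrow> (real \<times> real)^'n \<Rightarrow> (real \<times> real)^'n \<Rightarrow> real" where
  "omega_std = split_form (\<lambda>i z. 1)"

definition pullback :: "('a::real_normed_vector \<Rightarrow> 'a) \<Rightarrow> ('a \<Rightarrow> 'a \<Rightarrow> 'a \<Rightarrow> real) \<Rightarrow>
    ('a \<Rightarrow> 'a \<Rightarrow> 'a \<Rightarrow> real)" where
  "pullback \<phi> \<omega> = (\<lambda>x v w. \<omega> (\<phi> x) (frechet_derivative \<phi> (at x) v) (frechet_derivative \<phi> (at x) w))"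

definition Symp_std :: "((real \<times> real)^'n::finite \<Rightarrow> (real \<times> real)^'n) set" where
  "Symp_std = {\<phi>. diffeomorphism \<phi> \<and> pullback \<phi> omega_std = omega_std}"

end

theory Submission
  imports Defs
begin

text \<open>At a point x the differential A of \<phi> is a linear symplectic map, hence invertible.
  Write omega_h(p)(v, w) = omega_std(D_h v, w), where D_h multiplies the i-th coordinate
  pair by h_i(p_i). Then the pullback condition and nondegeneracy of omega_std give
  A D_g = D_f A, with D_g taken at x and D_f at \<phi> x. So D_f and D_g are conjugate, and
  their eigenspaces, of dimension twice the multiplicity of the eigenvalue among the
  diagonal entries, have equal dimensions.\<close>

definition scale_components :: "('n::finite \<Rightarrow> real) \<Rightarrow> ('a::real_vector)^'n \<Rightarrow> 'a^'n" where
  "scale_components h v = (\<chi> i. h i *\<^sub>R v $ i)"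

lemma scale_components_eigen_iff:
  "scale_components h v = c *\<^sub>R v \<longleftrightarrow> (\<forall>i. h i \<noteq> c \<longrightarrow> v $ i = 0)"
  by (auto simp: scale_components_def vec_eq_iff scaleR_cancel_right)

lemma dim_vanishing_components:
  "dim {v :: ('a::euclidean_space)^'n. \<forall>i. i \<notin> I \<longrightarrow> v $ i = 0} = DIM('a) * card I"
proof -
  let ?B = "(\<lambda>(i, u). axis i u) ` (I \<times> (Basis :: 'a set))"
  have "?B \<subseteq> Basis"
    by (auto simp: Basis_vec_def)
  moreover have "{v. \<forall>i. i \<notin> I \<longrightarrow> v $ i = 0} = {v. \<forall>b\<in>Basis. b \<notin> ?B \<longrightarrow> v \<bullet> b = 0}"
  proof (intro Collect_cong iffI)
    fix v :: "'a^'n"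
    assume v: "\<forall>b\<in>Basis. b \<notin> ?B \<longrightarrow> v \<bullet> b = 0"
    show "\<forall>i. i \<notin> I \<longrightarrow> v $ i = 0"
    proof (intro allI impI)
      fix i assume "i \<notin> I"
      have "v $ i \<bullet> u = 0" if "u \<in> Basis" for u
      proof -
        have "axis i u \<notin> ?B"
          using \<open>i \<notin> I\<close> that by (auto simp: axis_eq_axis nonzero_Basis)
        moreover have "axis i u \<in> Basis"
          using that by (auto simp: Basis_vec_def)
        ultimately show ?thesis
          using v by (metis inner_axis)
      qed
      then show "v $ i = 0"
        by (metis euclidean_all_zero_iff)
    qed
  qed (auto simp: Basis_vec_def inner_axis)
  moreover have "inj_on (\<lambda>(i, u). axis i u) (I \<times> (Basis :: 'a set))"
    by (auto simp: inj_on_def axis_eq_axis nonzero_Basis)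
  ultimately show ?thesis
    by (simp add: dim_substandard card_image card_cartesian_product)
qed

lemma dim_scale_components_eigenspace:
  "dim {v :: ('a::euclidean_space)^'n. scale_components h v = c *\<^sub>R v} = DIM('a) * card {i. h i = c}"
  using dim_vanishing_components[of "{i. h i = c}"] by (simp add: scale_components_eigen_iff)

lemma dim_eigenspace_conjugate:
  fixes A S T :: "'a::euclidean_space \<Rightarrow> 'a"
  assumes A: "linear A" "inj A" and conj: "\<And>v. A (S v) = T (A v)"
  shows "dim {u. T u = c *\<^sub>R u} = dim {v. S v = c *\<^sub>R v}"
proof -
  have "A ` {v. S v = c *\<^sub>R v} = {u. T u = c *\<^sub>R u}"
  proof (intro equalityI subsetI)
    fix u assume "u \<in> A ` {v. S v = c *\<^sub>R v}"
    then show "u \<in> {u. T u = c *\<^sub>R u}"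
      by (auto simp: linear_cmul[OF A(1)] simp flip: conj)
  next
    fix u assume u: "u \<in> {u. T u = c *\<^sub>R u}"
    have "surj A"
      using linear_injective_imp_surjective[OF A] by simp
    then obtain v where "u = A v"
      by (metis surjD)
    with u have "A (S v) = A (c *\<^sub>R v)"
      by (simp add: conj linear_cmul[OF A(1)])
    with \<open>u = A v\<close> \<open>inj A\<close> show "u \<in> A ` {v. S v = c *\<^sub>R v}"
      by (auto dest: injD)
  qed
  then show ?thesis
    using dim_image_eq[OF A(1)] A(2) by (metis inj_on_subset subset_UNIV)
qed

lemma count_image_mset_mset_set:
  "finite A \<Longrightarrow> count (image_mset f (mset_set A)) c = card {i \<in> A. f i = c}"
  by (simp add: count_image_mset vimage_def Int_def conj_commute)

lemma image_mset_mset_set_eqI: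
  assumes "\<And>c. card {i \<in> A. f i = c} = card {i \<in> A. g i = c}"
  shows "image_mset f (mset_set A) = image_mset g (mset_set A)"
proof (cases "finite A")
  case True
  then show ?thesis
    using assms by (intro multiset_eqI) (simp add: count_image_mset_mset_set)
qed simp

lemma linear_omega_std_left: "linear (\<lambda>u. omega_std p u w)"
  unfolding omega_std_def split_form_def
  by (intro linearI) (simp_all add: algebra_simps sum_distrib_left flip: sum.distrib)

lemma split_form_eq_omega_std:
  "split_form h p v w = omega_std p (scale_components (\<lambda>i. h i (p $ i)) v) w"
  unfolding split_form_def omega_std_def scale_components_def
  by (rule sum.cong) (auto simp: algebra_simps)

lemma omega_std_axis: "omega_std p u (axis i z) = fst (u $ i) * snd z - snd (u $ i) * fst z"
  unfolding split_form_def omega_std_def axis_def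
  by (simp add: if_distrib cong: if_cong)

lemma omega_std_nondegenerate:
  assumes "\<And>w. omega_std p u w = 0"
  shows "u = 0"
proof -
  have "u $ i = 0" for i
    using assms[of "axis i (0, 1)"] assms[of "axis i (1, 0)"]
    by (simp add: omega_std_axis prod_eq_iff)
  then show ?thesis
    by (simp add: vec_eq_iff)
qed

lemma symplectic_linear_inj:
  assumes A: "linear A" and symp: "\<And>v w. omega_std q (A v) (A w) = omega_std p v w"
  shows "inj A"
proof (rule linear_injective_0[OF A, THEN iffD2], intro allI impI)
  fix v assume "A v = 0"
  then have "omega_std p v w = 0" for w
    using symp[of v w] linear_0[OF linear_omega_std_left] by metis
  then show "v = 0"
    by (rule omega_std_nondegenerate)
qed

lemma pullback_split_form_intertwines:
  fixes A :: "(real \<times> real)^'n \<Rightarrow> (real \<times> real)^'n"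
  assumes A: "linear A" "inj A"
    and symp: "\<And>v w. omega_std q (A v) (A w) = omega_std p v w"
    and pull: "\<And>v w. split_form f q (A v) (A w) = split_form g p v w"
  shows "A (scale_components (\<lambda>i. g i (p $ i)) v) = scale_components (\<lambda>i. f i (q $ i)) (A v)"
proof -
  let ?G = "scale_components (\<lambda>i. g i (p $ i))" and ?F = "scale_components (\<lambda>i. f i (q $ i))"
  have "omega_std q (?F (A v) - A (?G v)) u = 0" for u
  proof -
    have "surj A"
      using linear_injective_imp_surjective[OF A] by simp
    then obtain w where u: "u = A w"
      by (metis surjD)
    have "omega_std q (?F (A v) - A (?G v)) u
        = omega_std q (?F (A v)) (A w) - omega_std q (A (?G v)) (A w)"
      unfolding u by (rule linear_diff[OF linear_omega_std_left])
    also have "\<dots> = split_form f q (A v) (A w) - split_form g p v w"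
      by (simp only: symp split_form_eq_omega_std)
    finally show ?thesis
      by (simp add: pull)
  qed
  then have "?F (A v) - A (?G v) = 0"
    by (rule omega_std_nondegenerate)
  then show ?thesis
    by simp
qed

lemma smooth_has_frechet_derivative:
  assumes "smooth f"
  shows "(f has_derivative frechet_derivative f (at x)) (at x)"
proof -
  from assms obtain F where "F [] = f" and "\<And>vs. (F vs has_derivative (\<lambda>h. F (h # vs) x)) (at x)"
    unfolding smooth_def by blast
  then have "f differentiable at x"
    unfolding differentiable_def by metis
  then show ?thesis
    by (rule frechet_derivative_works[THEN iffD1])
qed

theorem theorem2p5:
  fixes f g :: "'n::finite \<Rightarrow> real \<times> real \<Rightarrow> real"
    and \<phi> :: "(real \<times> real)^'n \<Rightarrow> (real \<times> real)^'n"
  assumes f_smooth: "\<And>i. smooth (f i)" and f_nz: "\<And>i z. f i z \<noteq> 0"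
    and g_smooth: "\<And>i. smooth (g i)" and g_nz: "\<And>i z. g i z \<noteq> 0"
    and symp: "\<phi> \<in> Symp_std"
    and pull: "pullback \<phi> (split_form f) = split_form g"
  shows "\<forall>x. image_mset (\<lambda>i. f i (\<phi> x $ i)) (mset_set UNIV)
           = image_mset (\<lambda>i. g i (x $ i)) (mset_set UNIV)"
proof
  fix x
  define A where "A = frechet_derivative \<phi> (at x)"
  have smooth: "smooth \<phi>" and symp_std: "pullback \<phi> omega_std = omega_std"
    using symp by (auto simp: Symp_std_def diffeomorphism_def)
  have lin: "linear A"
    unfolding A_def by (rule has_derivative_linear[OF smooth_has_frechet_derivative[OF smooth]])
  have A_symp: "omega_std (\<phi> x) (A v) (A w) = omega_std x v w" for v w
    using symp_std by (simp add: A_def pullback_def fun_eq_iff)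
  have A_pull: "split_form f (\<phi> x) (A v) (A w) = split_form g x v w" for v w
    using pull by (simp add: A_def pullback_def fun_eq_iff)
  have inj: "inj A"
    using lin A_symp by (rule symplectic_linear_inj)
  have dim_eq: "dim {u. scale_components (\<lambda>i. f i (\<phi> x $ i)) u = c *\<^sub>R (u :: (real \<times> real)^'n)}
      = dim {v. scale_components (\<lambda>i. g i (x $ i)) v = c *\<^sub>R (v :: (real \<times> real)^'n)}" for c
    by (rule dim_eigenspace_conjugate[OF lin inj])
      (rule pullback_split_form_intertwines[OF lin inj A_symp A_pull])
  have "card {i. f i (\<phi> x $ i) = c} = card {i. g i (x $ i) = c}" for c
    using dim_eq[of c] by (simp add: dim_scale_components_eigenspace)
  then show "image_mset (\<lambda>i. f i (\<phi> x $ i)) (mset_set UNIV)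
      = image_mset (\<lambda>i. g i (x $ i)) (mset_set UNIV)"
    by (intro image_mset_mset_set_eqI) simp
qed

end
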